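(* Let $\mathcal X$, $\mathbf f$, $\mathbf M$, $\mathbf B_j$, $\mathbf H_j$, $\Phi$, $\Xi$, $\tilde{\mathcal X}$, $\tilde{\mathbf f}$, $\tilde{\mathbf M}$ and $\Phi_A$ be as in the context. Let $\tilde{\xi}^*:\tilde{\mathcal X}\to[0,\infty)$ be a solution of the optimization problem $$\min \Phi_A(\tilde{\xi})$$ over all designs $\tilde\xi:\tilde{\mathcal X}\to[0,\infty)$ subject to (i) $\tilde{\xi}(j,x)=\tilde{\xi}(1,x)$ for all $x\in\mathcal X$ and all $j=2,\ldots,s$; (ii) $\tilde{\xi}(y)=1$ for all $y\in\tilde{\mathcal Y}_j$ and all $j=1,\ldots,s$; (iii) the design $\tilde{\xi}(1,\cdot): x\mapsto\tilde\xi(1,x)$ on $\mathcal X$ belongs to $\Xi$. Then $\tilde{\xi}^*(1,\cdot)$ is a CBR-optimal design in the class $\Xi$, i.e. $\tilde{\xi}^*(1,\cdot)\in\Xi$ and $\Phi(\tilde{\xi}^*(1,\cdot))\le\Phi(\xi)$ for all $\xi\in\Xi$.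
   Context: Let $\mathcal X$ be a finite set (design space) and $\mathbf f:\mathcal X\to\mathbb R^p$ with $\mathrm{span}\{\mathbf f(x):x\in\mathcal X\}=\mathbb R^p$. A design on $\mathcal X$ is a map $\xi:\mathcal X\to[0,\infty)$ (exact designs take values in $\{0,1,2,\dots\}$). Its information matrix is $\mathbf M(\xi)=\sum_{x\in\mathcal X}\xi(x)\mathbf f(x)\mathbf f(x)^\top$. Let $s\ge1$, let $\mathbf B_1,\ldots,\mathbf B_s$ be symmetric non-negative definite $p\times p$ matrices and $\mathbf H_1,\ldots,\mathbf H_s$ symmetric positive definite $p\times p$ matrices. The compound Bayes risk criterion (CBRC) is $\Phi(\xi)=\sum_{j=1}^s\mathrm{tr}\big((\mathbf M(\xi)+\mathbf B_j)^{-1}\mathbf H_j\big)$ if all $\mathbf M(\xi)+\mathbf B_j$ are non-singular, and $\Phi(\xi)=+\infty$ otherwise. Let $\Xi\subseteq[0,\infty)^{\mathcal X}$ be a set of permissible designs containing at least one $\xi$ with $\Phi(\xi)<+\infty$. Artificial model: let $r_j=\mathrm{rank}(\mathbf B_j)$, let $\tilde{\mathcal Y}_j=\{y^{(j)}_1,\ldots,y^{(j)}_{r_j}\}$ be auxiliary sets and $\tilde{\mathcal X}_j=\{j\}\times\mathcal X$, chosen so that $\tilde{\mathcal X}_1,\ldots,\tilde{\mathcal X}_s,\tilde{\mathcal Y}_1,\ldots,\tilde{\mathcal Y}_s$ are pairwise disjoint; set $\tilde{\mathcal X}=\bigcup_{j=1}^s(\tilde{\mathcal X}_j\cup\tilde{\mathcal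 Y}_j)$. For each $j$ choose $\mathbf K_j\in\mathbb R^{p\times p}$ with $\mathbf H_j=\mathbf K_j\mathbf K_j^\top$ (so $\mathbf K_j$ is non-singular), set $\tilde{\mathbf f}_j(x)=\mathbf K_j^{-1}\mathbf f(x)$ for $x\in\mathcal X$, and choose vectors $\mathbf u_j(y^{(j)}_k)\in\mathbb R^p$, $k=1,\ldots,r_j$, with $\mathbf K_j^{-1}\mathbf B_j\mathbf K_j^{-\top}=\sum_{k=1}^{r_j}\mathbf u_j(y^{(j)}_k)\mathbf u_j(y^{(j)}_k)^\top$. Define $\tilde{\mathbf f}:\tilde{\mathcal X}\to\mathbb R^{sp}$ by: $\tilde{\mathbf f}((j,x))$ is the vector whose $j$-th block of $p$ coordinates equals $\tilde{\mathbf f}_j(x)$ and all other coordinates are $0$; for $y\in\tilde{\mathcal Y}_j$, $\tilde{\mathbf f}(y)$ is the vector whose $j$-th block of $p$ coordinates equals $\mathbf u_j(y)$ and all other coordinates are $0$. For a design $\tilde\xi:\tilde{\mathcal X}\to[0,\infty)$ let $\tilde{\mathbf M}(\tilde\xi)=\sum_{\tilde x\in\tilde{\mathcal X}}\tilde\xi(\tilde x)\tilde{\mathbf f}(\tilde x)\tilde{\mathbf f}(\tilde x)^\top$, and let $\Phi_A(\tilde\xi)=\mathrm{tr}(\tilde{\mathbf M}(\tilde\xi)^{-1})$ if $\tilde{\mathbf M}(\tilde\xi)$ is non-singular and $\Phi_A(\tilde\xi)=+\infty$ otherwise ($A$-optimality criterion). *)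

theory Defs
  imports "HOL-Analysis.Analysis"
begin

definition outer :: "real^'n \<Rightarrow> real^'n \<Rightarrow> real^'n^'n" where
  "outer u v = (\<chi> i k. u$i * v$k)"

definition sym_psd :: "real^'n^'n \<Rightarrow> bool" where
  "sym_psd A \<longleftrightarrow> transpose A = A \<and> (\<forall>x. 0 \<le> x \<bullet> (A *v x))"

definition sym_pd :: "real^'n^'n \<Rightarrow> bool" where
  "sym_pd A \<longleftrightarrow> transpose A = A \<and> (\<forall>x. x \<noteq> 0 \<longrightarrow> 0 < x \<bullet> (A *v x))"

definition info_matrix :: "('x::finite \<Rightarrow> real^'n) \<Rightarrow> ('x \<Rightarrow> real) \<Rightarrow> real^'n^'n" where
  "info_matrix f \<xi> = (\<Sum>x\<in>UNIV. \<xi> x *\<^sub>R outer (f x) (f x))"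

text \<open>Compound Bayes risk criterion; the index set {1..s} is the finite type 'j.\<close>
definition CBRC :: "('x::finite \<Rightarrow> real^'n) \<Rightarrow> ('j::finite \<Rightarrow> real^'n^'n) \<Rightarrow> ('j \<Rightarrow> real^'n^'n)
    \<Rightarrow> ('x \<Rightarrow> real) \<Rightarrow> ereal" where
  "CBRC f B H \<xi> =
     (if (\<forall>j. invertible (info_matrix f \<xi> + B j))
      then ereal (\<Sum>j\<in>UNIV. trace (matrix_inv (info_matrix f \<xi> + B j) ** H j))
      else \<infinity>)"

definition blk :: "'j::finite \<Rightarrow> real^'n \<Rightarrow> real^('j \<times> 'n)" where
  "blk j v = (\<chi> il. if fst il = j then v $ snd il else 0)"

text \<open>Artificial design space: points Inl (j,x) are (j,x) in X~_j, points Inr (j,k) with k < r j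
  are the auxiliary points y^(j)_(k+1) in Y~_j.\<close>
definition art_space :: "('j \<Rightarrow> nat) \<Rightarrow> (('j \<times> 'x) + ('j \<times> nat)) set" where
  "art_space r = range Inl \<union> Inr ` {(j,k). k < r j}"

definition art_f :: "('x \<Rightarrow> real^'n) \<Rightarrow> ('j::finite \<Rightarrow> real^'n^'n) \<Rightarrow> ('j \<Rightarrow> nat \<Rightarrow> real^'n)
    \<Rightarrow> ('j \<times> 'x) + ('j \<times> nat) \<Rightarrow> real^('j \<times> 'n)" where
  "art_f f K u z = (case z of
      Inl (j, x) \<Rightarrow> blk j (matrix_inv (K j) *v f x)
    | Inr (j, k) \<Rightarrow> blk j (u j k))"

definition art_info_matrix :: "('x::finite \<Rightarrow> real^'n) \<Rightarrow> ('j::finite \<Rightarrow> real^'n^'n)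
    \<Rightarrow> ('j \<Rightarrow> nat \<Rightarrow> real^'n) \<Rightarrow> ('j \<Rightarrow> nat) \<Rightarrow> (('j \<times> 'x) + ('j \<times> nat) \<Rightarrow> real)
    \<Rightarrow> real^('j \<times> 'n)^('j \<times> 'n)" where
  "art_info_matrix f K u r \<xi> =
     (\<Sum>z\<in>art_space r. \<xi> z *\<^sub>R outer (art_f f K u z) (art_f f K u z))"

definition Phi_A :: "real^'m^'m \<Rightarrow> ereal" where
  "Phi_A M = (if invertible M then ereal (trace (matrix_inv M)) else \<infinity>)"

end

theory Submission
  imports Defs
begin

text \<open>
  Lifting a design \<open>\<xi>\<close> on the design space to the artificial space (weight \<open>\<xi> x\<close> at every \<open>(j, x)\<close>,
  weight 1 at every auxiliary point) yields an information matrix that is block diagonal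
  with \<open>j\<close>-th block \<open>K\<^sub>j\<^sup>-\<^sup>1 (M(\<xi>) + B\<^sub>j) K\<^sub>j\<^sup>-\<^sup>T\<close>. It is therefore invertible iff every
  \<open>M(\<xi>) + B\<^sub>j\<close> is, and then the trace of its inverse is
  \<open>\<Sum>\<^sub>j tr(K\<^sub>j\<^sup>T (M(\<xi>) + B\<^sub>j)\<^sup>-\<^sup>1 K\<^sub>j) = \<Sum>\<^sub>j tr((M(\<xi>) + B\<^sub>j)\<^sup>-\<^sup>1 H\<^sub>j)\<close>, so \<open>\<Phi>\<^sub>A\<close> of the
  lifted design equals \<open>\<Phi>(\<xi>)\<close>. The feasible artificial designs are exactly the lifts of the
  designs in \<open>\<Xi>\<close> (up to values off the artificial space, which do not matter), so an
  \<open>A\<close>-optimal feasible design restricts to a CBR-optimal one.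
\<close>

lemma outer_nth [simp]: "outer u v $ i $ k = u $ i * v $ k"
  by (simp add: outer_def)

lemma blk_nth [simp]: "blk j v $ (i, a) = (if i = j then v $ a else 0)"
  by (simp add: blk_def)

lemma matrix_eq_pairwise: "(\<And>i a k b. A $ (i, a) $ (k, b) = C $ (i, a) $ (k, b)) \<Longrightarrow> A = C"
  by (simp add: vec_eq_iff)

lemma sum_UNIV_prod: "sum g (UNIV :: ('a::finite \<times> 'b::finite) set) = (\<Sum>a\<in>UNIV. \<Sum>b\<in>UNIV. g (a, b))"
  by (simp add: sum.cartesian_product)

definition block_diag :: "('j::finite \<Rightarrow> 'a::zero^'n^'n) \<Rightarrow> 'a^('j \<times> 'n)^('j \<times> 'n)" where
  "block_diag N = (\<chi> p q. if fst p = fst q then N (fst p) $ snd p $ snd q else 0)"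

lemma block_diag_nth [simp]: "block_diag N $ (i, a) $ (k, b) = (if i = k then N i $ a $ b else 0)"
  by (simp add: block_diag_def)

lemma block_diag_mult:
  fixes N P :: "'j::finite \<Rightarrow> 'a::semiring_1^'n^'n"
  shows "block_diag N ** block_diag P = block_diag (\<lambda>j. N j ** P j)"
proof (rule matrix_eq_pairwise)
  fix i a k b
  have "(block_diag N ** block_diag P) $ (i, a) $ (k, b)
      = (\<Sum>j\<in>UNIV. if j = i then \<Sum>c\<in>UNIV. N i $ a $ c * (if i = k then P i $ c $ b else 0) else 0)"
    unfolding matrix_matrix_mult_def vec_lambda_beta sum_UNIV_prod by (rule sum.cong) auto
  then show "(block_diag N ** block_diag P) $ (i, a) $ (k, b) = block_diag (\<lambda>j. N j ** P j) $ (i, a) $ (k, b)"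
    by (simp add: matrix_matrix_mult_def)
qed

lemma block_diag_mat: "block_diag (\<lambda>j. mat c) = mat c"
  by (rule matrix_eq_pairwise) (simp add: mat_def)

lemma trace_block_diag: "trace (block_diag N) = (\<Sum>j\<in>UNIV. trace (N j))"
  by (simp add: trace_def sum_UNIV_prod)

lemma block_diag_zero [simp]: "block_diag (\<lambda>j. 0) = 0"
  by (rule matrix_eq_pairwise) simp

lemma block_diag_add:
  fixes N P :: "'j::finite \<Rightarrow> 'a::monoid_add^'n^'n"
  shows "block_diag (\<lambda>j. N j + P j) = block_diag N + block_diag P"
  by (rule matrix_eq_pairwise) simp

lemma block_diag_sum:
  fixes N :: "'x \<Rightarrow> 'j::finite \<Rightarrow> 'a::comm_monoid_add^'n^'n"
  shows "block_diag (\<lambda>j. \<Sum>x\<in>S. N x j) = (\<Sum>x\<in>S. block_diag (N x))"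
  by (induction S rule: infinite_finite_induct) (auto simp: block_diag_add)

lemma block_diag_scaleR: "block_diag (\<lambda>j. c *\<^sub>R N j) = c *\<^sub>R block_diag N"
  by (rule matrix_eq_pairwise) simp

lemma block_diag_sum_delta:
  fixes N :: "'j::finite \<Rightarrow> 'a::comm_monoid_add^'n^'n"
  shows "(\<Sum>j\<in>UNIV. block_diag (\<lambda>i. if i = j then N j else 0)) = block_diag N"
  by (simp add: block_diag_sum[symmetric] if_distrib cong: if_cong)

lemma block_diag_sum_single:
  fixes N :: "'x \<Rightarrow> 'a::comm_monoid_add^'n^'n"
  shows "(\<Sum>x\<in>S. block_diag (\<lambda>i. if i = j then N x else 0))
       = block_diag (\<lambda>i. if i = j then \<Sum>x\<in>S. N x else 0)"
  by (simp add: block_diag_sum[symmetric]) (rule arg_cong[where f = block_diag]; auto)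

lemma matrix_inv_right:
  fixes A :: "'a::semiring_1^'n^'m"
  assumes "invertible A"
  shows "A ** matrix_inv A = mat 1"
  using someI_ex[OF assms[unfolded invertible_def]] by (simp add: matrix_inv_def)

lemma matrix_inv_left:
  fixes A :: "'a::semiring_1^'n^'m"
  assumes "invertible A"
  shows "matrix_inv A ** A = mat 1"
  using someI_ex[OF assms[unfolded invertible_def]] by (simp add: matrix_inv_def)

lemma matrix_inv_unique:
  fixes A X :: "'a::field^'n^'n"
  assumes "A ** X = mat 1"
  shows "matrix_inv A = X"
proof -
  have "invertible A"
    using assms invertible_right_inverse by blast
  then show ?thesis
    using assms by (metis matrix_inv_left matrix_mul_assoc matrix_mul_lid matrix_mul_rid)
qed

lemma invertible_matrix_inv:
  fixes A :: "'a::field^'n^'n"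
  assumes "invertible A"
  shows "invertible (matrix_inv A)"
  using assms matrix_inv_left invertible_right_inverse by blast

lemma matrix_inv_matrix_inv:
  fixes A :: "'a::field^'n^'n"
  assumes "invertible A"
  shows "matrix_inv (matrix_inv A) = A"
  using assms by (simp add: matrix_inv_unique matrix_inv_left)

lemma matrix_inv_mult:
  fixes A B :: "'a::field^'n^'n"
  assumes "invertible A" "invertible B"
  shows "matrix_inv (A ** B) = matrix_inv B ** matrix_inv A"
proof (rule matrix_inv_unique)
  show "A ** B ** (matrix_inv B ** matrix_inv A) = mat 1"
    using assms by (simp add: matrix_mul_assoc[symmetric]) (simp add: matrix_mul_assoc matrix_inv_right)
qed

lemma matrix_inv_transpose:
  fixes A :: "'a::field^'n^'n"
  assumes "invertible A"
  shows "matrix_inv (transpose A) = transpose (matrix_inv A)"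
  using assms by (metis matrix_inv_left matrix_inv_unique matrix_transpose_mul transpose_mat)

lemma invertible_mult_iff:
  fixes A P Q :: "'a::field^'n^'n"
  assumes "invertible P" "invertible Q"
  shows "invertible (P ** A ** Q) \<longleftrightarrow> invertible A"
proof
  assume "invertible (P ** A ** Q)"
  moreover have "matrix_inv P ** (P ** A ** Q) ** matrix_inv Q
      = (matrix_inv P ** P) ** A ** (Q ** matrix_inv Q)"
    by (simp add: matrix_mul_assoc)
  then have "A = matrix_inv P ** (P ** A ** Q) ** matrix_inv Q"
    using assms by (simp add: matrix_inv_left matrix_inv_right)
  ultimately show "invertible A"
    using assms by (metis invertible_matrix_inv invertible_mult)
qed (use assms invertible_mult in blast)

lemma invertible_block_diag:
  fixes N :: "'j::finite \<Rightarrow> 'a::field^'n^'n"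
  shows "invertible (block_diag N) \<longleftrightarrow> (\<forall>j. invertible (N j))"
proof
  assume "invertible (block_diag N)"
  then obtain X where X: "X ** block_diag N = mat 1"
    unfolding invertible_def by blast
  show "\<forall>j. invertible (N j)"
  proof
    fix j
    define P where "P = (\<chi> a c. X $ (j, a) $ (j, c))"
    have "(P ** N j) $ a $ b = (X ** block_diag N) $ (j, a) $ (j, b)" for a b
    proof -
      have "(X ** block_diag N) $ (j, a) $ (j, b)
          = (\<Sum>i\<in>UNIV. if i = j then \<Sum>c\<in>UNIV. X $ (j, a) $ (j, c) * N j $ c $ b else 0)"
        unfolding matrix_matrix_mult_def vec_lambda_beta sum_UNIV_prod by (rule sum.cong) auto
      then show ?thesis
        by (simp add: matrix_matrix_mult_def P_def)
    qed
    then have "P ** N j = mat 1"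
      using X by (simp add: vec_eq_iff mat_def)
    then show "invertible (N j)"
      using invertible_left_inverse by blast
  qed
next
  assume "\<forall>j. invertible (N j)"
  then have "block_diag N ** block_diag (\<lambda>j. matrix_inv (N j)) = mat 1"
    by (simp add: block_diag_mult matrix_inv_right block_diag_mat)
  then show "invertible (block_diag N)"
    using invertible_right_inverse by blast
qed

lemma matrix_inv_block_diag:
  fixes N :: "'j::finite \<Rightarrow> 'a::field^'n^'n"
  assumes "\<forall>j. invertible (N j)"
  shows "matrix_inv (block_diag N) = block_diag (\<lambda>j. matrix_inv (N j))"
  using assms by (simp add: matrix_inv_unique block_diag_mult matrix_inv_right block_diag_mat)

lemma trace_matrix_inv_congruence:
  fixes A K :: "real^'n^'n"
  assumes "invertible K" "invertible A"
  shows "trace (matrix_inv (matrix_inv K ** A ** transpose (matrix_inv K)))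
       = trace (matrix_inv A ** (K ** transpose K))"
proof -
  have "matrix_inv (matrix_inv K ** A ** transpose (matrix_inv K)) = transpose K ** (matrix_inv A ** K)"
    using assms
    by (simp add: matrix_inv_mult invertible_mult invertible_matrix_inv transpose_invertible
        matrix_inv_transpose matrix_inv_matrix_inv)
  then show ?thesis
    using trace_mul_sym[of "transpose K" "matrix_inv A ** K"] by (simp add: matrix_mul_assoc)
qed

lemma invertible_if_sym_pd_mult_transpose:
  fixes K :: "real^'n^'n"
  assumes "sym_pd (K ** transpose K)"
  shows "invertible K"
proof -
  have "x = 0" if "transpose K *v x = 0" for x
  proof -
    have "x \<bullet> ((K ** transpose K) *v x) = 0"
      using that by (simp add: matrix_vector_mul_assoc[symmetric])
    then show "x = 0"
      using assms unfolding sym_pd_def by force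
  qed
  then have "invertible (transpose K)"
    using matrix_left_invertible_ker invertible_left_inverse by blast
  then show ?thesis
    using transpose_invertible by fastforce
qed

lemma matrix_add_rdistrib:
  fixes A B C :: "'a::semiring_1^'n^'n"
  shows "(A + B) ** C = A ** C + B ** C"
  by (simp add: matrix_matrix_mult_def vec_eq_iff sum.distrib algebra_simps)

lemma info_matrix_congruence:
  fixes A :: "real^'n^'n"
  shows "A ** info_matrix f \<xi> ** transpose A = info_matrix (\<lambda>x. A *v f x) \<xi>"
proof -
  have outer: "A ** outer v v ** transpose A = outer (A *v v) (A *v v)" for v
    by (simp add: vec_eq_iff matrix_matrix_mult_def matrix_vector_mult_def transpose_def
        sum_distrib_left sum_distrib_right mult_ac)
  have "A ** (\<Sum>x\<in>S. \<xi> x *\<^sub>R outer (f x) (f x)) ** transpose A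
      = (\<Sum>x\<in>S. \<xi> x *\<^sub>R outer (A *v f x) (A *v f x))" if "finite S" for S
    using that
    by (induction S rule: finite_induct)
      (simp_all add: matrix_add_ldistrib matrix_add_rdistrib matrix_scalar_ac
        scalar_matrix_assoc[symmetric] outer)
  then show ?thesis
    by (simp add: info_matrix_def)
qed

lemma outer_blk: "outer (blk j v) (blk j w) = block_diag (\<lambda>i. if i = j then outer v w else 0)"
  by (rule matrix_eq_pairwise) simp

definition lift_design :: "('x \<Rightarrow> real) \<Rightarrow> ('j \<times> 'x) + ('j \<times> nat) \<Rightarrow> real" where
  "lift_design \<xi> = case_sum (\<lambda>(_, x). \<xi> x) (\<lambda>_. 1)"

lemma art_info_matrix_cong:
  assumes "\<forall>z\<in>art_space r. \<xi> z = \<xi>' z"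
  shows "art_info_matrix f K u r \<xi> = art_info_matrix f K u r \<xi>'"
  using assms unfolding art_info_matrix_def by (intro sum.cong) auto

lemma art_info_matrix_lift_design:
  fixes f :: "'x::finite \<Rightarrow> real^'n" and K :: "'j::finite \<Rightarrow> real^'n^'n"
  shows "art_info_matrix f K u r (lift_design \<xi>)
       = block_diag (\<lambda>j. info_matrix (\<lambda>x. matrix_inv (K j) *v f x) \<xi> + (\<Sum>k<r j. outer (u j k) (u j k)))"
proof -
  define g where "g z = lift_design \<xi> z *\<^sub>R outer (art_f f K u z) (art_f f K u z)" for z
  define S where "S = (SIGMA j:UNIV. {..<r j})"
  have space: "art_space r = range Inl \<union> Inr ` S"
    by (auto simp: art_space_def S_def)
  have "sum g (range Inl) = (\<Sum>j\<in>UNIV. \<Sum>x\<in>UNIV. g (Inl (j, x)))"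
    by (simp add: sum.reindex sum_UNIV_prod)
  also have "\<dots> = (\<Sum>j\<in>UNIV. block_diag (\<lambda>i. if i = j then info_matrix (\<lambda>x. matrix_inv (K j) *v f x) \<xi> else 0))"
    by (simp add: g_def lift_design_def art_f_def outer_blk info_matrix_def
        block_diag_scaleR[symmetric] if_distrib block_diag_sum_single cong: if_cong)
  finally have left: "sum g (range Inl) = block_diag (\<lambda>j. info_matrix (\<lambda>x. matrix_inv (K j) *v f x) \<xi>)"
    by (simp add: block_diag_sum_delta)
  have "sum g (Inr ` S) = (\<Sum>j\<in>UNIV. \<Sum>k<r j. g (Inr (j, k)))"
    by (simp add: sum.reindex S_def sum.Sigma)
  also have "\<dots> = (\<Sum>j\<in>UNIV. block_diag (\<lambda>i. if i = j then \<Sum>k<r j. outer (u j k) (u j k) else 0))"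
    by (simp add: g_def lift_design_def art_f_def outer_blk block_diag_sum_single)
  finally have right: "sum g (Inr ` S) = block_diag (\<lambda>j. \<Sum>k<r j. outer (u j k) (u j k))"
    by (simp add: block_diag_sum_delta)
  have "art_info_matrix f K u r (lift_design \<xi>) = sum g (range Inl) + sum g (Inr ` S)"
    unfolding art_info_matrix_def space g_def[symmetric]
    by (rule sum.union_disjoint) (auto simp: S_def)
  then show ?thesis
    by (simp add: left right block_diag_add)
qed

lemma Phi_A_art_info_matrix_lift_design:
  fixes f :: "'x::finite \<Rightarrow> real^'n" and B H K :: "'j::finite \<Rightarrow> real^'n^'n"
  assumes K_inv: "\<forall>j. invertible (K j)"
    and K_fact: "\<forall>j. H j = K j ** transpose (K j)"
    and u_fact: "\<forall>j. matrix_inv (K j) ** B j ** transpose (matrix_inv (K j))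
                    = (\<Sum>k<r j. outer (u j k) (u j k))"
  shows "Phi_A (art_info_matrix f K u r (lift_design \<xi>)) = CBRC f B H \<xi>"
proof -
  define N where "N j = matrix_inv (K j) ** (info_matrix f \<xi> + B j) ** transpose (matrix_inv (K j))" for j
  have "N = (\<lambda>j. info_matrix (\<lambda>x. matrix_inv (K j) *v f x) \<xi> + (\<Sum>k<r j. outer (u j k) (u j k)))"
    by (intro ext) (simp add: N_def matrix_add_ldistrib matrix_add_rdistrib info_matrix_congruence u_fact)
  then have art: "art_info_matrix f K u r (lift_design \<xi>) = block_diag N"
    by (simp add: art_info_matrix_lift_design)
  have N_inv: "invertible (N j) \<longleftrightarrow> invertible (info_matrix f \<xi> + B j)" for j
    unfolding N_def using K_inv
    by (simp add: invertible_mult_iff invertible_matrix_inv transpose_invertible)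
  show ?thesis
  proof (cases "\<forall>j. invertible (info_matrix f \<xi> + B j)")
    case True
    then have "Phi_A (block_diag N) = ereal (\<Sum>j\<in>UNIV. trace (matrix_inv (N j)))"
      by (simp add: Phi_A_def N_inv invertible_block_diag matrix_inv_block_diag trace_block_diag)
    also have "\<dots> = CBRC f B H \<xi>"
      using True K_inv by (simp add: CBRC_def N_def trace_matrix_inv_congruence K_fact)
    finally show ?thesis
      by (simp add: art)
  next
    case False
    then show ?thesis
      by (auto simp: art Phi_A_def CBRC_def N_inv invertible_block_diag)
  qed
qed

theorem theorem1:
  fixes f :: "'x::finite \<Rightarrow> real^'n"
    and B H K :: "'j::finite \<Rightarrow> real^'n^'n"
    and u :: "'j \<Rightarrow> nat \<Rightarrow> real^'n"
    and \<Xi> :: "('x \<Rightarrow> real) set"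
    and j1 :: 'j
    and \<xi>s :: "('j \<times> 'x) + ('j \<times> nat) \<Rightarrow> real"
  assumes span_f: "span (range f) = UNIV"
    and B_psd: "\<forall>j. sym_psd (B j)"
    and H_pd: "\<forall>j. sym_pd (H j)"
    and Xi_nonneg: "\<forall>\<xi>\<in>\<Xi>. \<forall>x. 0 \<le> \<xi> x"
    and Xi_finite: "\<exists>\<xi>\<in>\<Xi>. CBRC f B H \<xi> < \<infinity>"
    and K_fact: "\<forall>j. H j = K j ** transpose (K j)"
    and u_fact: "\<forall>j. matrix_inv (K j) ** B j ** transpose (matrix_inv (K j))
                    = (\<Sum>k<rank (B j). outer (u j k) (u j k))"
    and feas: "(\<forall>z\<in>art_space (\<lambda>j. rank (B j)). 0 \<le> \<xi>s z)
             \<and> (\<forall>j x. \<xi>s (Inl (j, x)) = \<xi>s (Inl (j1, x)))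
             \<and> (\<forall>j k. k < rank (B j) \<longrightarrow> \<xi>s (Inr (j, k)) = 1)
             \<and> (\<lambda>x. \<xi>s (Inl (j1, x))) \<in> \<Xi>"
    and opt: "\<forall>\<xi>t :: ('j \<times> 'x) + ('j \<times> nat) \<Rightarrow> real.
               ((\<forall>z\<in>art_space (\<lambda>j. rank (B j)). 0 \<le> \<xi>t z)
                \<and> (\<forall>j x. \<xi>t (Inl (j, x)) = \<xi>t (Inl (j1, x)))
                \<and> (\<forall>j k. k < rank (B j) \<longrightarrow> \<xi>t (Inr (j, k)) = 1)
                \<and> (\<lambda>x. \<xi>t (Inl (j1, x))) \<in> \<Xi>)
               \<longrightarrow> Phi_A (art_info_matrix f K u (\<lambda>j. rank (B j)) \<xi>s)
                   \<le> Phi_A (art_info_matrix f K u (\<lambda>j. rank (B j)) \<xi>t)"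
  shows "(\<lambda>x. \<xi>s (Inl (j1, x))) \<in> \<Xi>
       \<and> (\<forall>\<xi>\<in>\<Xi>. CBRC f B H (\<lambda>x. \<xi>s (Inl (j1, x))) \<le> CBRC f B H \<xi>)"
proof -
  let ?r = "\<lambda>j. rank (B j)" and ?\<xi>1 = "\<lambda>x. \<xi>s (Inl (j1, x))"
  have K_inv: "\<forall>j. invertible (K j)"
    using H_pd K_fact invertible_if_sym_pd_mult_transpose by metis
  note Phi_A_lift = Phi_A_art_info_matrix_lift_design[OF K_inv K_fact u_fact]
  have "art_info_matrix f K u ?r \<xi>s = art_info_matrix f K u ?r (lift_design ?\<xi>1)"
    using feas by (intro art_info_matrix_cong) (auto simp: art_space_def lift_design_def)
  then have \<xi>s_value: "Phi_A (art_info_matrix f K u ?r \<xi>s) = CBRC f B H ?\<xi>1"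
    by (simp add: Phi_A_lift)
  have "CBRC f B H ?\<xi>1 \<le> CBRC f B H \<xi>" if "\<xi> \<in> \<Xi>" for \<xi>
  proof -
    have "(\<forall>z\<in>art_space ?r. 0 \<le> lift_design \<xi> z)
        \<and> (\<forall>j x. lift_design \<xi> (Inl (j, x)) = lift_design \<xi> (Inl (j1, x)))
        \<and> (\<forall>j k. k < ?r j \<longrightarrow> lift_design \<xi> (Inr (j, k)) = 1)
        \<and> (\<lambda>x. lift_design \<xi> (Inl (j1, x))) \<in> \<Xi>"
      using that Xi_nonneg by (auto simp: art_space_def lift_design_def)
    then have "Phi_A (art_info_matrix f K u ?r \<xi>s) \<le> Phi_A (art_info_matrix f K u ?r (lift_design \<xi>))"
      using opt by blast
    then show ?thesis
      by (simp add: \<xi>s_value Phi_A_lift)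
  qed
  with feas show ?thesis
    by blast
qed

end
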